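(* The pair $(g,\eta)$ forms an exact pencil: with $e=\frac{\partial}{\partial u_{n-1}}$ one has $\mathcal{L}_e g=\eta$ and $\mathcal{L}_e\eta=0$.
   Context: $n\ge2$. $B_n$ acts on $\mathbb{C}^n$ (coordinates $p_1,\dots,p_n$) by permutations and sign changes. $u_k=\sum_{1\le i_1<\dots<i_k\le n}p_{i_1}^2\cdots p_{i_k}^2$ ($k=1,\dots,n$) are coordinates on the orbit space. $g$ is the cometric $g^{ij}(u)=\sum_{k,l}\frac{1-\delta^{kl}}{p_kp_l}\frac{\partial u_i}{\partial p_k}\frac{\partial u_j}{\partial p_l}$ (a polynomial in $u$) and $\eta^{ij}(u)=\frac{\partial g^{ij}}{\partial u_{n-1}}(u)$; $(g,\eta)$ is a flat pencil of contravariant metrics. $\mathcal{L}$ denotes the Lie derivative. *)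

theory Defs
  imports "HOL-Analysis.Analysis"
begin

text \<open>Points of C^n and of the orbit space are represented as functions nat => complex,
  only the coordinates 1..n being relevant.\<close>

definition uB :: "nat \<Rightarrow> (nat \<Rightarrow> complex) \<Rightarrow> nat \<Rightarrow> complex" where
  "uB n p k = (\<Sum>S\<in>{S. S \<subseteq> {1..n} \<and> card S = k}. \<Prod>i\<in>S. (p i)^2)"

definition pdiff :: "((nat \<Rightarrow> complex) \<Rightarrow> complex) \<Rightarrow> nat \<Rightarrow> (nat \<Rightarrow> complex) \<Rightarrow> complex" where
  "pdiff F k x = deriv (\<lambda>t. F (x(k := t))) (x k)"

text \<open>The cometric g^{ij} written in the p-coordinates (on the set where all p_k are nonzero).\<close>
definition gB :: "nat \<Rightarrow> nat \<Rightarrow> nat \<Rightarrow> (nat \<Rightarrow> complex) \<Rightarrow> complex" where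
  "gB n i j p = (\<Sum>k\<in>{1..n}. \<Sum>l\<in>{1..n}.
      (if k = l then 0 else 1) / (p k * p l)
        * pdiff (\<lambda>q. uB n q i) k p * pdiff (\<lambda>q. uB n q j) l p)"

definition is_poly_fun :: "nat \<Rightarrow> ((nat \<Rightarrow> complex) \<Rightarrow> complex) \<Rightarrow> bool" where
  "is_poly_fun n f \<longleftrightarrow> (\<exists>A :: (nat \<Rightarrow> nat) set. \<exists>c :: (nat \<Rightarrow> nat) \<Rightarrow> complex. finite A \<and>
      (\<forall>x. f x = (\<Sum>\<alpha>\<in>A. c \<alpha> * (\<Prod>i\<in>{1..n}. (x i) ^ (\<alpha> i)))))"

definition lie2 :: "nat \<Rightarrow> ((nat \<Rightarrow> complex) \<Rightarrow> nat \<Rightarrow> complex)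
     \<Rightarrow> ((nat \<Rightarrow> complex) \<Rightarrow> nat \<Rightarrow> nat \<Rightarrow> complex) \<Rightarrow> (nat \<Rightarrow> complex) \<Rightarrow> nat \<Rightarrow> nat \<Rightarrow> complex" where
  "lie2 n X T x i j =
     (\<Sum>k\<in>{1..n}. X x k * pdiff (\<lambda>y. T y i j) k x)
   - (\<Sum>k\<in>{1..n}. T x k j * pdiff (\<lambda>y. X y i) k x)
   - (\<Sum>k\<in>{1..n}. T x i k * pdiff (\<lambda>y. X y j) k x)"

definition eB :: "nat \<Rightarrow> (nat \<Rightarrow> complex) \<Rightarrow> nat \<Rightarrow> complex" where
  "eB n x k = (if k = n - 1 then 1 else 0)"

definition etaB :: "nat \<Rightarrow> ((nat \<Rightarrow> complex) \<Rightarrow> nat \<Rightarrow> nat \<Rightarrow> complex) \<Rightarrow> (nat \<Rightarrow> complex) \<Rightarrow> nat \<Rightarrow> nat \<Rightarrow> complex" where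
  "etaB n G x i j = pdiff (\<lambda>y. G y i j) (n - 1) x"

end

theory Submission
  imports Defs
begin

text \<open>Write x_m = p_m^2, so that u_a is the a-th elementary symmetric function e_a of the x_m, and
  let e_a(k) denote the same function of the x_m with m ~= k. Then du_(c+1)/dp_k = 2 p_k e_c(k), hence
  g^(c+1,d+1) = 4 (sum over k ~= l of e_c(k) e_d(l)) = 4 ((n-c)(n-d) u_c u_d - sum_k e_c(k) e_d(k)).
  Removing x_k from e_(c+1) yields a recursion in (c, d) for the last sum, which expresses it as a
  quadratic polynomial in the u_a; in the resulting polynomial for g the coordinate u_(n-1) occurs at most
  linearly. Since e = d/du_(n-1) has constant components, L_e T = dT/du_(n-1) for every contravariant
  2-tensor T, so L_e g = eta, and L_e eta = d^2 g/du_(n-1)^2 = 0.\<close>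

section \<open>Elementary symmetric polynomials\<close>

definition esym :: "('b \<Rightarrow> 'a::comm_ring_1) \<Rightarrow> 'b set \<Rightarrow> nat \<Rightarrow> 'a" where
  "esym x I a = (\<Sum>S\<in>{S. S \<subseteq> I \<and> card S = a}. \<Prod>i\<in>S. x i)"

lemma esym_0 [simp]:
  assumes "finite I"
  shows "esym x I 0 = 1"
proof -
  have "{S. S \<subseteq> I \<and> card S = 0} = {{}}"
    using assms finite_subset by fastforce
  then show ?thesis by (simp add: esym_def)
qed

lemma esym_eq_0:
  assumes "finite I" "card I < a"
  shows "esym x I a = 0"
proof -
  have "card S < a" if "S \<subseteq> I" for S
    using card_mono[OF assms(1) that] assms(2) by linarith
  then have "{S. S \<subseteq> I \<and> card S = a} = {}"
    by blast
  then show ?thesis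
    by (simp only: esym_def sum.empty)
qed

lemma esym_cong: "(\<And>i. i \<in> I \<Longrightarrow> x i = y i) \<Longrightarrow> esym x I a = esym y I a"
  unfolding esym_def by (intro sum.cong refl prod.cong) auto

lemma subsets_card_Suc_insert:
  assumes "finite I" "k \<notin> I"
  shows "{S. S \<subseteq> insert k I \<and> card S = Suc a}
       = {S. S \<subseteq> I \<and> card S = Suc a} \<union> insert k ` {S. S \<subseteq> I \<and> card S = a}"
proof (intro equalityI subsetI)
  fix S assume S: "S \<in> {S. S \<subseteq> insert k I \<and> card S = Suc a}"
  then have "finite S" using assms(1) finite_subset by auto
  then show "S \<in> {S. S \<subseteq> I \<and> card S = Suc a} \<union> insert k ` {S. S \<subseteq> I \<and> card S = a}"
    using S by (cases "k \<in> S") (auto simp: image_iff intro!: exI[of _ "S - {k}"])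
next
  fix S assume "S \<in> {S. S \<subseteq> I \<and> card S = Suc a} \<union> insert k ` {S. S \<subseteq> I \<and> card S = a}"
  then show "S \<in> {S. S \<subseteq> insert k I \<and> card S = Suc a}"
    using assms by (auto simp: card_insert_if finite_subset)
qed

lemma esym_insert:
  assumes "finite I" "k \<notin> I"
  shows "esym x (insert k I) (Suc a) = esym x I (Suc a) + x k * esym x I a"
proof -
  let ?A = "{S. S \<subseteq> I \<and> card S = Suc a}" and ?B = "{S. S \<subseteq> I \<and> card S = a}"
  have "inj_on (insert k) ?B"
    using assms(2) by (auto simp: inj_on_def)
  moreover have "(\<Prod>i\<in>insert k S. x i) = x k * (\<Prod>i\<in>S. x i)" if "S \<in> ?B" for S
    using that assms by (auto intro: prod.insert finite_subset)
  ultimately have "(\<Sum>S\<in>insert k ` ?B. \<Prod>i\<in>S. x i) = x k * esym x I a"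
    by (simp add: sum.reindex esym_def sum_distrib_left)
  moreover have "esym x (insert k I) (Suc a)
      = (\<Sum>S\<in>?A. \<Prod>i\<in>S. x i) + (\<Sum>S\<in>insert k ` ?B. \<Prod>i\<in>S. x i)"
    unfolding esym_def subsets_card_Suc_insert[OF assms]
    by (rule sum.union_disjoint) (use assms in auto)
  ultimately show ?thesis
    by (simp add: esym_def)
qed

lemma esym_remove:
  "finite I \<Longrightarrow> k \<in> I \<Longrightarrow> esym x I (Suc a) = esym x (I - {k}) (Suc a) + x k * esym x (I - {k}) a"
  using esym_insert[of "I - {k}" k x a] by (simp add: insert_absorb)

lemma sum_esym_remove:
  assumes "finite I"
  shows "(\<Sum>k\<in>I. esym x (I - {k}) a) = (of_nat (card I) - of_nat a) * esym x I a"
proof -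
  let ?B = "{S. S \<subseteq> I \<and> card S = a}"
  have "(\<Sum>k\<in>I. esym x (I - {k}) a) = (\<Sum>k\<in>I. \<Sum>S\<in>{S. S \<in> ?B \<and> k \<notin> S}. \<Prod>i\<in>S. x i)"
    unfolding esym_def by (intro sum.cong) auto
  also have "\<dots> = (\<Sum>S\<in>?B. \<Sum>k\<in>{k. k \<in> I \<and> k \<notin> S}. \<Prod>i\<in>S. x i)"
    by (rule sum.swap_restrict) (use assms in auto)
  also have "\<dots> = (\<Sum>S\<in>?B. of_nat (card I - a) * (\<Prod>i\<in>S. x i))"
  proof (rule sum.cong)
    fix S assume S: "S \<in> ?B"
    then have "card {k. k \<in> I \<and> k \<notin> S} = card I - a"
      using assms card_Diff_subset[of S I] finite_subset[of S I] by (simp add: set_diff_eq[symmetric])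
    then show "(\<Sum>k\<in>{k. k \<in> I \<and> k \<notin> S}. \<Prod>i\<in>S. x i) = of_nat (card I - a) * (\<Prod>i\<in>S. x i)"
      by simp
  qed simp
  also have "\<dots> = of_nat (card I - a) * esym x I a"
    by (simp add: esym_def sum_distrib_left)
  also have "\<dots> = (of_nat (card I) - of_nat a) * esym x I a"
    using esym_eq_0[OF assms, of a x] by (cases "a \<le> card I") (simp_all add: of_nat_diff)
  finally show ?thesis .
qed

definition esym_pair_sum :: "('b \<Rightarrow> 'a::comm_ring_1) \<Rightarrow> 'b set \<Rightarrow> nat \<Rightarrow> nat \<Rightarrow> 'a" where
  "esym_pair_sum x I c d = (\<Sum>k\<in>I. esym x (I - {k}) c * esym x (I - {k}) d)"

lemma esym_pair_sum_Suc_left: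
  assumes "finite I"
  shows "esym_pair_sum x I (Suc c) d = esym_pair_sum x I c (Suc d)
     + (of_nat (card I) - of_nat d) * esym x I (Suc c) * esym x I d
     - (of_nat (card I) - of_nat c) * esym x I c * esym x I (Suc d)"
proof -
  have summand: "esym x (I - {k}) (Suc c) * esym x (I - {k}) d - esym x (I - {k}) c * esym x (I - {k}) (Suc d)
     = esym x I (Suc c) * esym x (I - {k}) d - esym x I (Suc d) * esym x (I - {k}) c" if "k \<in> I" for k
    using esym_remove[OF assms that, of x c] esym_remove[OF assms that, of x d]
    by (simp add: algebra_simps)
  have "esym_pair_sum x I (Suc c) d - esym_pair_sum x I c (Suc d)
     = (\<Sum>k\<in>I. esym x I (Suc c) * esym x (I - {k}) d - esym x I (Suc d) * esym x (I - {k}) c)"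
    unfolding esym_pair_sum_def sum_subtractf[symmetric] by (rule sum.cong) (simp_all add: summand)
  also have "\<dots> = esym x I (Suc c) * (\<Sum>k\<in>I. esym x (I - {k}) d)
      - esym x I (Suc d) * (\<Sum>k\<in>I. esym x (I - {k}) c)"
    by (simp add: sum_subtractf sum_distrib_left)
  finally show ?thesis
    by (simp add: sum_esym_remove[OF assms] algebra_simps)
qed

text \<open>The closed form obtained by iterating esym_pair_sum_Suc_left in c.\<close>

definition pair_sum_poly :: "'a::comm_ring_1 \<Rightarrow> (nat \<Rightarrow> 'a) \<Rightarrow> nat \<Rightarrow> nat \<Rightarrow> 'a" where
  "pair_sum_poly N E c d = (N - of_nat c - of_nat d) * E (c + d)
     + (\<Sum>r<c. (N - of_nat d - of_nat r) * E (c - r) * E (d + r)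
              - (N - of_nat c + of_nat r + 1) * E (c - r - 1) * E (d + r + 1))"

lemma esym_pair_sum_eq_poly:
  assumes "finite I"
  shows "esym_pair_sum x I c d = pair_sum_poly (of_nat (card I)) (esym x I) c d"
proof (induction c arbitrary: d)
  case 0
  then show ?case
    using assms by (simp add: esym_pair_sum_def sum_esym_remove pair_sum_poly_def)
next
  case (Suc c)
  let ?N = "of_nat (card I)" and ?E = "esym x I"
  define R where "R = (\<Sum>r<c. (?N - of_nat (Suc d) - of_nat r) * ?E (c - r) * ?E (Suc d + r)
      - (?N - of_nat c + of_nat r + 1) * ?E (c - r - 1) * ?E (Suc d + r + 1))"
  have poly: "pair_sum_poly ?N ?E (Suc c) d = (?N - of_nat (Suc c) - of_nat d) * ?E (Suc (c + d))
     + (?N - of_nat d) * ?E (Suc c) * ?E d - (?N - of_nat c) * ?E c * ?E (Suc d) + R"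
    unfolding pair_sum_poly_def sum.lessThan_Suc_shift R_def
    by (simp add: of_nat_Suc algebra_simps)
  have pair_sum: "esym_pair_sum x I (Suc c) d = (?N - of_nat c - of_nat (Suc d)) * ?E (Suc (c + d)) + R
     + (?N - of_nat d) * ?E (Suc c) * ?E d - (?N - of_nat c) * ?E c * ?E (Suc d)"
    unfolding esym_pair_sum_Suc_left[OF assms] Suc pair_sum_poly_def R_def by simp
  show ?case
    unfolding poly pair_sum by (simp add: of_nat_Suc algebra_simps)
qed

text \<open>The right-hand side of cometric_poly_eq, with the summand r = 0 of pair_sum_poly merged into
  the first product, so that no product E (n-1) * E (n-1) occurs when c <= n - 1.\<close>

definition cometric_poly :: "nat \<Rightarrow> (nat \<Rightarrow> 'a::comm_ring_1) \<Rightarrow> nat \<Rightarrow> nat \<Rightarrow> 'a" where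
  "cometric_poly n E c d = (if c = 0 then (of_nat n - 1) * (of_nat n - of_nat d) * E d else
     (of_nat n - of_nat c - 1) * (of_nat n - of_nat d) * E c * E d
     - (of_nat n - of_nat c - of_nat d) * E (c + d)
     - (\<Sum>r<c - 1. (of_nat n - of_nat d - of_nat r - 1) * E (c - r - 1) * E (d + r + 1))
     + (\<Sum>r<c. (of_nat n - of_nat c + of_nat r + 1) * E (c - r - 1) * E (d + r + 1)))"

lemma cometric_poly_eq:
  assumes "E 0 = 1"
  shows "cometric_poly n E c d
    = (of_nat n - of_nat c) * (of_nat n - of_nat d) * E c * E d - pair_sum_poly (of_nat n) E c d"
proof (cases c)
  case 0
  then show ?thesis
    using assms by (simp add: cometric_poly_def pair_sum_poly_def algebra_simps)
next
  case (Suc c')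
  let ?N = "of_nat n"
  define Y where "Y = (\<Sum>r<c'. (?N - of_nat d - of_nat r - 1) * E (c' - r) * E (d + r + 1))"
  define Z where "Z = (\<Sum>r<c. (?N - of_nat c + of_nat r + 1) * E (c - r - 1) * E (d + r + 1))"
  have "(\<Sum>r<c. (?N - of_nat d - of_nat r) * E (c - r) * E (d + r))
      = (?N - of_nat d) * E c * E d + Y"
    unfolding Suc sum.lessThan_Suc_shift Y_def by (simp add: of_nat_Suc algebra_simps)
  then have pair_sum: "pair_sum_poly ?N E c d = (?N - of_nat c - of_nat d) * E (c + d)
      + (?N - of_nat d) * E c * E d + Y - Z"
    unfolding pair_sum_poly_def sum_subtractf Z_def by simp
  have cometric: "cometric_poly n E c d = (?N - of_nat c - 1) * (?N - of_nat d) * E c * E d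
      - (?N - of_nat c - of_nat d) * E (c + d) - Y + Z"
    unfolding cometric_poly_def Y_def Z_def Suc by simp
  show ?thesis
    unfolding pair_sum cometric by (simp add: algebra_simps)
qed

section \<open>The cometric in the invariant coordinates\<close>

lemma sum_sum_off_diagonal:
  fixes f g :: "'b \<Rightarrow> 'a::comm_ring"
  assumes "finite I"
  shows "(\<Sum>k\<in>I. \<Sum>l\<in>I. if k = l then 0 else f k * g l) = sum f I * sum g I - (\<Sum>k\<in>I. f k * g k)"
proof -
  have "(\<Sum>l\<in>I. if k = l then 0 else f k * g l) = (\<Sum>l\<in>I. f k * g l - (if k = l then f k * g k else 0))"
    for k by (rule sum.cong) auto
  then show ?thesis
    using assms by (simp add: sum_subtractf sum_product)
qed

definition uext :: "nat \<Rightarrow> (nat \<Rightarrow> complex) \<Rightarrow> nat \<Rightarrow> complex" where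
  "uext n x a = (if a = 0 then 1 else if a \<le> n then x a else 0)"

lemma uB_eq_esym: "uB n p a = esym (\<lambda>m. (p m)^2) {1..n} a"
  by (simp add: uB_def esym_def)

lemma uext_uB: "uext n (uB n p) = esym (\<lambda>m. (p m)^2) {1..n}"
  by (auto simp: uext_def uB_eq_esym esym_eq_0)

lemma pdiff_uB_Suc:
  assumes "k \<in> {1..n}"
  shows "pdiff (\<lambda>q. uB n q (Suc a)) k p = 2 * p k * esym (\<lambda>m. (p m)^2) ({1..n} - {k}) a"
proof -
  let ?e = "\<lambda>b. esym (\<lambda>m. (p m)^2) ({1..n} - {k}) b"
  have "esym (\<lambda>m. (p(k := t)) m ^ 2) ({1..n} - {k}) b = ?e b" for t b
    by (rule esym_cong) simp
  then have "(\<lambda>t. uB n (p(k := t)) (Suc a)) = (\<lambda>t. ?e (Suc a) + t^2 * ?e a)"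
    unfolding uB_eq_esym esym_remove[OF finite_atLeastAtMost assms] by simp
  moreover have "((\<lambda>t. ?e (Suc a) + t^2 * ?e a) has_field_derivative 2 * p k * ?e a) (at (p k))"
    by (auto intro!: derivative_eq_intros)
  ultimately show ?thesis
    unfolding pdiff_def by (simp add: DERIV_imp_deriv)
qed

lemma gB_Suc_Suc:
  assumes "\<forall>k\<in>{1..n}. p k \<noteq> 0"
  shows "gB n (Suc c) (Suc d) p = 4 * ((of_nat n - of_nat c) * (of_nat n - of_nat d)
      * esym (\<lambda>m. (p m)^2) {1..n} c * esym (\<lambda>m. (p m)^2) {1..n} d
      - esym_pair_sum (\<lambda>m. (p m)^2) {1..n} c d)"
proof -
  let ?x = "\<lambda>m. (p m)^2" and ?I = "{1..n}"
  define f where "f a k = 2 * esym ?x (?I - {k}) a" for a k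
  have gB: "gB n (Suc c) (Suc d) p = (\<Sum>k\<in>?I. \<Sum>l\<in>?I. if k = l then 0 else f c k * f d l)"
    unfolding gB_def
  proof (intro sum.cong refl)
    fix k l assume "k \<in> ?I" "l \<in> ?I"
    with assms show "(if k = l then 0 else 1) / (p k * p l) * pdiff (\<lambda>q. uB n q (Suc c)) k p
        * pdiff (\<lambda>q. uB n q (Suc d)) l p = (if k = l then 0 else f c k * f d l)"
      by (simp add: pdiff_uB_Suc f_def field_simps)
  qed
  have sums: "sum (f a) ?I = 2 * (of_nat n - of_nat a) * esym ?x ?I a" for a
    unfolding f_def by (simp add: sum_distrib_left[symmetric] sum_esym_remove)
  have diagonal: "(\<Sum>k\<in>?I. f c k * f d k) = 4 * esym_pair_sum ?x ?I c d"
    by (simp add: f_def esym_pair_sum_def sum_distrib_left)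
  show ?thesis
    unfolding gB sum_sum_off_diagonal[OF finite_atLeastAtMost] sums diagonal by (simp add: algebra_simps)
qed

lemma gB_eq_cometric_poly:
  assumes "\<forall>k\<in>{1..n}. p k \<noteq> 0" "i \<in> {1..n}" "j \<in> {1..n}"
  shows "gB n i j p = 4 * cometric_poly n (uext n (uB n p)) (i - 1) (j - 1)"
proof -
  obtain c d where "i = Suc c" "j = Suc d"
    using assms(2,3) by (metis atLeastAtMost_iff not0_implies_Suc not_one_le_zero)
  then show ?thesis
    by (simp add: gB_Suc_Suc[OF assms(1)] uext_uB cometric_poly_eq esym_pair_sum_eq_poly)
qed

section \<open>Polynomial functions\<close>

definition monomial_fun :: "nat \<Rightarrow> (nat \<Rightarrow> nat) \<Rightarrow> (nat \<Rightarrow> complex) \<Rightarrow> complex" where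
  "monomial_fun n \<alpha> x = (\<Prod>i\<in>{1..n}. x i ^ \<alpha> i)"

lemma is_poly_fun_iff_monomial_fun:
  "is_poly_fun n f \<longleftrightarrow> (\<exists>A c. finite A \<and> (\<forall>x. f x = (\<Sum>\<alpha>\<in>A. c \<alpha> * monomial_fun n \<alpha> x)))"
  unfolding is_poly_fun_def monomial_fun_def ..

lemma is_poly_funI:
  assumes "finite T" "\<And>x. f x = (\<Sum>t\<in>T. w t * monomial_fun n (\<alpha> t) x)"
  shows "is_poly_fun n f"
  unfolding is_poly_fun_iff_monomial_fun
proof (intro exI conjI allI)
  show "finite (\<alpha> ` T)"
    using assms(1) by simp
  fix x
  have "f x = (\<Sum>\<beta>\<in>\<alpha> ` T. \<Sum>t | t \<in> T \<and> \<alpha> t = \<beta>. w t * monomial_fun n (\<alpha> t) x)"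
    unfolding assms(2) by (rule sum.image_gen[OF assms(1)])
  also have "\<dots> = (\<Sum>\<beta>\<in>\<alpha> ` T. (\<Sum>t | t \<in> T \<and> \<alpha> t = \<beta>. w t) * monomial_fun n \<beta> x)"
    by (rule sum.cong) (auto simp: sum_distrib_right)
  finally show "f x = (\<Sum>\<beta>\<in>\<alpha> ` T. (\<Sum>t | t \<in> T \<and> \<alpha> t = \<beta>. w t) * monomial_fun n \<beta> x)" .
qed

lemma is_poly_fun_const: "is_poly_fun n (\<lambda>x. k)"
  by (rule is_poly_funI[of "{()}" _ "\<lambda>_. k" n "\<lambda>_ _. 0"]) (simp_all add: monomial_fun_def)

lemma is_poly_fun_var:
  assumes "a \<in> {1..n}"
  shows "is_poly_fun n (\<lambda>x. x a)"
proof (rule is_poly_funI[of "{()}" _ "\<lambda>_. 1" n "\<lambda>_ i. if i = a then 1 else 0"])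
  fix x
  have "monomial_fun n (\<lambda>i. if i = a then 1 else 0) x = (\<Prod>i\<in>{1..n}. if i = a then x i else 1)"
    unfolding monomial_fun_def by (rule prod.cong) auto
  then show "x a = (\<Sum>t\<in>{()}. 1 * monomial_fun n (\<lambda>i. if i = a then 1 else 0) x)"
    using assms by simp
qed simp

lemma is_poly_fun_add:
  assumes "is_poly_fun n f" "is_poly_fun n g"
  shows "is_poly_fun n (\<lambda>x. f x + g x)"
proof -
  obtain A c where A: "finite A" "\<And>x. f x = (\<Sum>\<alpha>\<in>A. c \<alpha> * monomial_fun n \<alpha> x)"
    using assms(1) unfolding is_poly_fun_iff_monomial_fun by blast
  obtain B d where B: "finite B" "\<And>x. g x = (\<Sum>\<beta>\<in>B. d \<beta> * monomial_fun n \<beta> x)"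
    using assms(2) unfolding is_poly_fun_iff_monomial_fun by blast
  show ?thesis
  proof (rule is_poly_funI[of "A <+> B" _ "case_sum c d" n "case_sum id id"])
    show "finite (A <+> B)"
      using A B by simp
    show "f x + g x = (\<Sum>t\<in>A <+> B. case_sum c d t * monomial_fun n (case_sum id id t) x)" for x
      unfolding sum.Plus[OF A(1) B(1)] A(2) B(2) by (simp add: comp_def)
  qed
qed

lemma is_poly_fun_mult:
  assumes "is_poly_fun n f" "is_poly_fun n g"
  shows "is_poly_fun n (\<lambda>x. f x * g x)"
proof -
  obtain A c where A: "finite A" "\<And>x. f x = (\<Sum>\<alpha>\<in>A. c \<alpha> * monomial_fun n \<alpha> x)"
    using assms(1) unfolding is_poly_fun_iff_monomial_fun by blast
  obtain B d where B: "finite B" "\<And>x. g x = (\<Sum>\<beta>\<in>B. d \<beta> * monomial_fun n \<beta> x)"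
    using assms(2) unfolding is_poly_fun_iff_monomial_fun by blast
  have monomial_fun_add: "monomial_fun n (\<lambda>i. \<alpha> i + \<beta> i) x = monomial_fun n \<alpha> x * monomial_fun n \<beta> x"
    for \<alpha> \<beta> x by (simp add: monomial_fun_def power_add prod.distrib)
  show ?thesis
  proof (rule is_poly_funI[of "A \<times> B" _ "\<lambda>(\<alpha>, \<beta>). c \<alpha> * d \<beta>" n "\<lambda>(\<alpha>, \<beta>) i. \<alpha> i + \<beta> i"])
    show "finite (A \<times> B)"
      using A B by simp
    fix x
    have "f x * g x = (\<Sum>(\<alpha>, \<beta>)\<in>A \<times> B. (c \<alpha> * monomial_fun n \<alpha> x) * (d \<beta> * monomial_fun n \<beta> x))"
      unfolding A(2) B(2) sum_product sum.cartesian_product ..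
    then show "f x * g x = (\<Sum>t\<in>A \<times> B. (case t of (\<alpha>, \<beta>) \<Rightarrow> c \<alpha> * d \<beta>)
        * monomial_fun n (case t of (\<alpha>, \<beta>) \<Rightarrow> \<lambda>i. \<alpha> i + \<beta> i) x)"
      by (simp add: monomial_fun_add split_def mult_ac)
  qed
qed

lemma is_poly_fun_diff:
  assumes "is_poly_fun n f" "is_poly_fun n g"
  shows "is_poly_fun n (\<lambda>x. f x - g x)"
  using is_poly_fun_add[OF assms(1) is_poly_fun_mult[OF is_poly_fun_const assms(2)], of "-1"] by simp

lemma is_poly_fun_sum:
  "(\<And>r. r \<in> R \<Longrightarrow> is_poly_fun n (f r)) \<Longrightarrow> is_poly_fun n (\<lambda>x. \<Sum>r\<in>R. f r x)"
  by (induction R rule: infinite_finite_induct) (simp_all add: is_poly_fun_const is_poly_fun_add)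

lemma is_poly_fun_uext: "is_poly_fun n (\<lambda>x. uext n x a)"
  by (cases "a = 0"; cases "a \<le> n") (simp_all add: uext_def is_poly_fun_const is_poly_fun_var)

lemma is_poly_fun_cometric_poly: "is_poly_fun n (\<lambda>x. cometric_poly n (uext n x) c d)"
proof (cases "c = 0")
  case True
  then show ?thesis
    by (simp add: cometric_poly_def is_poly_fun_mult is_poly_fun_const is_poly_fun_uext)
next
  case False
  then show ?thesis
    by (simp only: cometric_poly_def if_False)
      (intro is_poly_fun_mult is_poly_fun_add is_poly_fun_diff is_poly_fun_sum
        is_poly_fun_const is_poly_fun_uext)
qed

section \<open>Affine dependence on u_(n-1)\<close>

definition is_affine_fun :: "('a::comm_ring_1 \<Rightarrow> 'a) \<Rightarrow> bool" where
  "is_affine_fun f \<longleftrightarrow> (\<exists>a b. \<forall>t. f t = a + b * t)"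

lemma is_affine_fun_const: "is_affine_fun (\<lambda>t. a)"
  unfolding is_affine_fun_def by (rule exI[of _ a], rule exI[of _ 0]) simp

lemma is_affine_fun_ident: "is_affine_fun (\<lambda>t. t)"
  unfolding is_affine_fun_def by (rule exI[of _ 0], rule exI[of _ 1]) simp

lemma is_affine_fun_add:
  assumes "is_affine_fun f" "is_affine_fun g"
  shows "is_affine_fun (\<lambda>t. f t + g t)"
proof -
  obtain a b a' b' where "\<And>t. f t = a + b * t" "\<And>t. g t = a' + b' * t"
    using assms unfolding is_affine_fun_def by blast
  then show ?thesis
    unfolding is_affine_fun_def by (intro exI[of _ "a + a'"] exI[of _ "b + b'"]) (simp add: algebra_simps)
qed

lemma is_affine_fun_cmult:
  assumes "is_affine_fun f"
  shows "is_affine_fun (\<lambda>t. c * f t)"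
proof -
  obtain a b where "\<And>t. f t = a + b * t"
    using assms unfolding is_affine_fun_def by blast
  then show ?thesis
    unfolding is_affine_fun_def by (intro exI[of _ "c * a"] exI[of _ "c * b"]) (simp add: algebra_simps)
qed

lemma is_affine_fun_diff: "is_affine_fun f \<Longrightarrow> is_affine_fun g \<Longrightarrow> is_affine_fun (\<lambda>t. f t - g t)"
  using is_affine_fun_add[of f "\<lambda>t. - 1 * g t"] is_affine_fun_cmult[of g "- 1"] by simp

lemma is_affine_fun_sum:
  "(\<And>r. r \<in> R \<Longrightarrow> is_affine_fun (f r)) \<Longrightarrow> is_affine_fun (\<lambda>t. \<Sum>r\<in>R. f r t)"
  by (induction R rule: infinite_finite_induct) (simp_all add: is_affine_fun_const is_affine_fun_add)

lemma is_affine_fun_eq: "is_affine_fun f \<Longrightarrow> f t = f 0 + (f 1 - f 0) * t"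
  unfolding is_affine_fun_def by auto

lemma uext_fun_upd: "m \<in> {1..n} \<Longrightarrow> uext n (y(m := t)) a = (if a = m then t else uext n y a)"
  by (auto simp: uext_def)

lemma is_affine_fun_cometric_poly:
  assumes n: "n \<ge> 2" and c: "c \<le> n - 1"
  shows "is_affine_fun (\<lambda>t. cometric_poly n (uext n (y(n - 1 := t))) c d)"
proof -
  let ?E = "\<lambda>t. uext n (y(n - 1 := t))"
  have m: "n - 1 \<in> {1..n}"
    using n by simp
  have linear: "is_affine_fun (\<lambda>t. ?E t a)" for a
    unfolding uext_fun_upd[OF m]
    by (cases "a = n - 1") (simp_all add: is_affine_fun_ident is_affine_fun_const)
  have product: "is_affine_fun (\<lambda>t. k * ?E t a * ?E t b)" if "a \<noteq> n - 1" for k a b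
  proof -
    have "?E t a = uext n y a" for t
      using that uext_fun_upd[OF m, of y t a] by simp
    then show ?thesis
      using is_affine_fun_cmult[OF linear, of "k * uext n y a" b] by simp
  qed
  show ?thesis
  proof (cases "c = 0")
    case True
    show ?thesis
      unfolding cometric_poly_def if_P[OF True] by (intro is_affine_fun_cmult linear)
  next
    case False
    have leading: "is_affine_fun (\<lambda>t. (of_nat n - of_nat c - 1) * k * ?E t c * ?E t d)" for k
    proof (cases "c = n - 1")
      case True
      then have "of_nat n - of_nat c - 1 = (0 :: complex)"
        using n by (simp add: of_nat_diff)
      then show ?thesis
        by (simp add: is_affine_fun_const)
    qed (rule product)
    have "c - r - 1 \<noteq> n - 1" for r
      using c False by linarith
    then show ?thesis
      unfolding cometric_poly_def if_not_P[OF False]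
      by (intro is_affine_fun_add is_affine_fun_diff is_affine_fun_sum is_affine_fun_cmult linear
          leading product)
  qed
qed

section \<open>Lie derivatives along d/du_(n-1)\<close>

lemma lie2_eB_eq_pdiff:
  assumes "n \<ge> 2"
  shows "lie2 n (eB n) T x i j = pdiff (\<lambda>y. T y i j) (n - 1) x"
proof -
  have "(\<Sum>k\<in>{1..n}. eB n x k * f k) = (\<Sum>k\<in>{1..n}. if k = n - 1 then f k else 0)" for f
    by (rule sum.cong) (simp_all add: eB_def)
  also have "\<dots> f = f (n - 1)" for f :: "nat \<Rightarrow> complex"
    using assms by simp
  moreover have "pdiff (\<lambda>y. eB n y k) l x = 0" for k l
    by (simp add: eB_def pdiff_def)
  ultimately show ?thesis
    unfolding lie2_def by simp
qed

lemma pdiff_affine: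
  assumes "is_affine_fun (\<lambda>t. F (y(m := t)))"
  shows "pdiff F m y = F (y(m := 1)) - F (y(m := 0))"
proof -
  have "(\<lambda>t. F (y(m := t))) = (\<lambda>t. F (y(m := 0)) + (F (y(m := 1)) - F (y(m := 0))) * t)"
    by (rule ext) (rule is_affine_fun_eq[OF assms])
  moreover have "((\<lambda>t. F (y(m := 0)) + (F (y(m := 1)) - F (y(m := 0))) * t)
      has_field_derivative F (y(m := 1)) - F (y(m := 0))) (at (y m))"
    by (auto intro!: derivative_eq_intros)
  ultimately show ?thesis
    unfolding pdiff_def by (simp add: DERIV_imp_deriv)
qed

lemma pdiff_pdiff_eq_0_if_affine:
  assumes "\<And>y. is_affine_fun (\<lambda>t. F (y(m := t)))"
  shows "pdiff (pdiff F m) m x = 0"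
proof -
  have "pdiff F m (x(m := t)) = F (x(m := 1)) - F (x(m := 0))" for t
    using pdiff_affine[OF assms, of "x(m := t)"] by (simp only: fun_upd_upd)
  then show ?thesis
    unfolding pdiff_def[of "pdiff F m"] by simp
qed

theorem mainTheorem14:
  fixes n :: nat
  assumes "n \<ge> 2"
  shows "\<exists>G :: (nat \<Rightarrow> complex) \<Rightarrow> nat \<Rightarrow> nat \<Rightarrow> complex.
     (\<forall>i\<in>{1..n}. \<forall>j\<in>{1..n}. is_poly_fun n (\<lambda>x. G x i j)) \<and>
     (\<forall>p. (\<forall>k\<in>{1..n}. p k \<noteq> 0) \<longrightarrow>
        (\<forall>i\<in>{1..n}. \<forall>j\<in>{1..n}. G (uB n p) i j = gB n i j p)) \<and>
     (\<forall>x. \<forall>i\<in>{1..n}. \<forall>j\<in>{1..n}. lie2 n (eB n) G x i j = etaB n G x i j) \<and>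
     (\<forall>x. \<forall>i\<in>{1..n}. \<forall>j\<in>{1..n}. lie2 n (eB n) (etaB n G) x i j = 0)"
proof -
  define G where "G x i j = 4 * cometric_poly n (uext n x) (i - 1) (j - 1)" for x i j
  have poly: "is_poly_fun n (\<lambda>x. G x i j)" for i j
    unfolding G_def by (intro is_poly_fun_mult is_poly_fun_const is_poly_fun_cometric_poly)
  have coincide: "G (uB n p) i j = gB n i j p"
    if "\<forall>k\<in>{1..n}. p k \<noteq> 0" "i \<in> {1..n}" "j \<in> {1..n}" for p i j
    using gB_eq_cometric_poly[OF that] by (simp add: G_def)
  have lie_G: "lie2 n (eB n) G x i j = etaB n G x i j" for x i j
    by (simp add: lie2_eB_eq_pdiff[OF assms] etaB_def)
  have "is_affine_fun (\<lambda>t. G (y(n - 1 := t)) i j)" if "i \<in> {1..n}" for y i j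
    unfolding G_def using assms that by (intro is_affine_fun_cmult is_affine_fun_cometric_poly) auto
  then have lie_eta: "lie2 n (eB n) (etaB n G) x i j = 0" if "i \<in> {1..n}" for x i j
    using that by (simp add: lie2_eB_eq_pdiff[OF assms] etaB_def pdiff_pdiff_eq_0_if_affine)
  show ?thesis
    by (intro exI[of _ G]) (simp add: poly coincide lie_G lie_eta)
qed

end
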